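(* Let $T$ be a discrete space, let $\alpha T=T\cup\{\infty\}$ be its Alexandroff (one-point) compactification, and let $f:\alpha T\to\mathbb R$ be a Baire one function. Then there exists a countable set $S\subseteq T$ such that $f$ is constant on $\alpha T\setminus S$.
   Context: In $\alpha T$ the points of $T$ are isolated and the neighbourhoods of $\infty$ are the sets $\alpha T\setminus E$ with $E\subseteq T$ finite. A function is Baire one if it is the pointwise limit of a sequence of continuous real functions. *)

theory Defs
  imports "HOL-Analysis.Analysis"
begin

text \<open>The one-point (Alexandroff) compactification of a discrete space with
carrier T: points are Some t (t in T) together with the point at infinity None.\<close>

definition alpha_carrier :: "'a set \<Rightarrow> 'a option set" where
  "alpha_carrier T = insert None (Some ` T)"

definition alexandroff_discrete :: "'a set \<Rightarrow> 'a option topology" where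
  "alexandroff_discrete T = topology (\<lambda>U. U \<subseteq> alpha_carrier T \<and>
      (None \<in> U \<longrightarrow> finite (alpha_carrier T - U)))"

definition baire_one :: "'b topology \<Rightarrow> ('b \<Rightarrow> real) \<Rightarrow> bool" where
  "baire_one X f \<longleftrightarrow> (\<exists>g :: nat \<Rightarrow> 'b \<Rightarrow> real.
      (\<forall>n. continuous_map X euclideanreal (g n)) \<and>
      (\<forall>x \<in> topspace X. (\<lambda>n. g n x) \<longlonglongrightarrow> f x))"

end

theory Submission
  imports Defs
begin

text \<open>A neighbourhood of \<open>\<infinity>\<close> omits only finitely many points, so a continuous real
function \<open>h\<close> on \<open>\<alpha>T\<close> satisfies \<open>\<bar>h t - h \<infinity>\<bar> < 1/(k+1)\<close> for all but finitely many
\<open>t\<close>; hence \<open>h t \<noteq> h \<infinity>\<close> only for countably many \<open>t\<close>. If \<open>f\<close> is the pointwise limit of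
continuous \<open>g\<^sub>n\<close>, let \<open>S\<close> be the countable union of these exceptional sets: off \<open>S\<close>
every \<open>g\<^sub>n\<close> takes its value at \<open>\<infinity>\<close>, and so does the limit \<open>f\<close>.\<close>

lemma istopology_alexandroff_discrete:
  "istopology (\<lambda>U. U \<subseteq> alpha_carrier T \<and> (None \<in> U \<longrightarrow> finite (alpha_carrier T - U)))"
  unfolding istopology_def
proof (rule conjI; intro allI impI)
  fix U V :: "'a option set"
  assume "U \<subseteq> alpha_carrier T \<and> (None \<in> U \<longrightarrow> finite (alpha_carrier T - U))"
    and "V \<subseteq> alpha_carrier T \<and> (None \<in> V \<longrightarrow> finite (alpha_carrier T - V))"
  then show "U \<inter> V \<subseteq> alpha_carrier T \<and> (None \<in> U \<inter> V \<longrightarrow> finite (alpha_carrier T - U \<inter> V))"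
    by (auto simp: Diff_Int)
next
  fix K :: "'a option set set"
  assume K: "\<forall>U\<in>K. U \<subseteq> alpha_carrier T \<and> (None \<in> U \<longrightarrow> finite (alpha_carrier T - U))"
  have "finite (alpha_carrier T - \<Union>K)" if "U \<in> K" "None \<in> U" for U
    using K that by (blast intro: finite_subset[of _ "alpha_carrier T - U"])
  with K show "\<Union>K \<subseteq> alpha_carrier T \<and> (None \<in> \<Union>K \<longrightarrow> finite (alpha_carrier T - \<Union>K))"
    by blast
qed

lemma openin_alexandroff_discrete:
  "openin (alexandroff_discrete T) U \<longleftrightarrow>
     U \<subseteq> alpha_carrier T \<and> (None \<in> U \<longrightarrow> finite (alpha_carrier T - U))"
  unfolding alexandroff_discrete_def topology_inverse'[OF istopology_alexandroff_discrete] by (rule refl)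

lemma topspace_alexandroff_discrete: "topspace (alexandroff_discrete T) = alpha_carrier T"
proof (rule subset_antisym)
  show "topspace (alexandroff_discrete T) \<subseteq> alpha_carrier T"
    using openin_topspace[of "alexandroff_discrete T"] by (simp only: openin_alexandroff_discrete)
  show "alpha_carrier T \<subseteq> topspace (alexandroff_discrete T)"
    by (rule openin_subset) (simp add: openin_alexandroff_discrete)
qed

lemma countable_neq_continuous_map_at_cocountable_point:
  assumes h: "continuous_map X euclideanreal h" and p: "p \<in> topspace X"
    and cocountable: "\<And>U. openin X U \<Longrightarrow> p \<in> U \<Longrightarrow> countable (topspace X - U)"
  shows "countable {x \<in> topspace X. h x \<noteq> h p}"
proof -
  define U where "U k = {x \<in> topspace X. h x \<in> ball (h p) (1 / Suc k)}" for k :: nat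
  have "openin X (U k)" for k
    unfolding U_def by (rule openin_continuous_map_preimage[OF h]) simp
  moreover have "p \<in> U k" for k
    using p by (simp add: U_def)
  ultimately have countable_outside: "countable (topspace X - U k)" for k
    by (rule cocountable)
  have "x \<in> (\<Union>k. topspace X - U k)" if "x \<in> topspace X" "h x \<noteq> h p" for x
  proof -
    obtain k where "inverse (real (Suc k)) < dist (h p) (h x)"
      using reals_Archimedean \<open>h x \<noteq> h p\<close> by (metis zero_less_dist_iff)
    then have "x \<notin> U k"
      by (simp add: U_def inverse_eq_divide)
    with \<open>x \<in> topspace X\<close> show ?thesis by blast
  qed
  then have "{x \<in> topspace X. h x \<noteq> h p} \<subseteq> (\<Union>k. topspace X - U k)"
    by blast
  moreover have "countable (\<Union>k. topspace X - U k)"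
    using countable_outside by blast
  ultimately show ?thesis
    by (rule countable_subset)
qed

lemma countable_neq_continuous_map_alexandroff_discrete:
  assumes "continuous_map (alexandroff_discrete T) euclideanreal h"
  shows "countable {t \<in> T. h (Some t) \<noteq> h None}"
proof -
  have "countable {x \<in> alpha_carrier T. h x \<noteq> h None}"
    using countable_neq_continuous_map_at_cocountable_point[OF assms, of None]
    by (simp add: topspace_alexandroff_discrete openin_alexandroff_discrete
        alpha_carrier_def countable_finite)
  moreover have "Some ` {t \<in> T. h (Some t) \<noteq> h None} \<subseteq> {x \<in> alpha_carrier T. h x \<noteq> h None}"
    by (auto simp: alpha_carrier_def)
  ultimately show ?thesis
    by (meson countable_image_inj_on countable_subset inj_Some inj_on_subset subset_UNIV)
qed

theorem lemma3p1:
  fixes T :: "'a set" and f :: "'a option \<Rightarrow> real"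
  assumes "baire_one (alexandroff_discrete T) f"
  shows "\<exists>S. S \<subseteq> T \<and> countable S \<and>
           (\<exists>c. \<forall>x \<in> alpha_carrier T - Some ` S. f x = c)"
proof -
  obtain g :: "nat \<Rightarrow> 'a option \<Rightarrow> real" where
    g_cont: "\<And>n. continuous_map (alexandroff_discrete T) euclideanreal (g n)" and
    g_lim: "\<And>x. x \<in> alpha_carrier T \<Longrightarrow> (\<lambda>n. g n x) \<longlonglongrightarrow> f x"
    using assms unfolding baire_one_def topspace_alexandroff_discrete by blast
  define S where "S = (\<Union>n. {t \<in> T. g n (Some t) \<noteq> g n None})"
  have "countable S"
    unfolding S_def using countable_neq_continuous_map_alexandroff_discrete[OF g_cont] by blast
  moreover have "f (Some t) = f None" if "t \<in> T" "t \<notin> S" for t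
  proof -
    have "(\<lambda>n. g n (Some t)) = (\<lambda>n. g n None)"
      using that by (auto simp: S_def)
    then show ?thesis
      using g_lim[of "Some t"] g_lim[of None] that(1)
      by (auto simp: alpha_carrier_def intro: LIMSEQ_unique)
  qed
  ultimately have "S \<subseteq> T \<and> countable S \<and> (\<forall>x \<in> alpha_carrier T - Some ` S. f x = f None)"
    by (auto simp: S_def alpha_carrier_def)
  then show ?thesis by blast
qed

end
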